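(* Let $\mathcal{K}=\mathcal{C}_\circ\setminus \mathcal{C}_\circ\mathcal{A}^+$. Then $\mathcal{K}$ is a prefix code and $\mathcal{K}^*=\mathcal{C}^*$. Moreover, every word of $\mathcal{C}^*$ admits a unique factorization $\kappa_{1}\kappa_{2}\cdots\kappa_{j}$ with $j\ge 0$ and all $\kappa_i\in\mathcal{K}$; that is, $\mathcal{K}$ generates $\mathcal{C}^*$ unambiguously.
   Context: Let $\mathcal{A}$ be a finite alphabet and $w\in\mathcal{A}^*$ a fixed word of length $\ell=|w|\ge 2$. The autocorrelation set of $w$ is $\mathcal{C}=\{\epsilon\}\cup\{e\in\mathcal{A}^+ : |e|<\ell \text{ and there exists } e'\in\mathcal{A}^+ \text{ with } we=e'w\}$, and $\mathcal{C}_\circ=\mathcal{C}\setminus\{\epsilon\}$. For languages $L_1,L_2$, $L_1L_2$ denotes concatenation and $L^*$ the Kleene star. Thus $\mathcal{K}=\mathcal{C}_\circ\setminus \mathcal{C}_\circ\mathcal{A}^+$ is the set of words of $\mathcal{C}_\circ$ that have no proper prefix lying in $\mathcal{C}_\circ$. *)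

theory Defs
  imports Main
begin

definition lconc :: "'a list set \<Rightarrow> 'a list set \<Rightarrow> 'a list set" where
  "lconc L1 L2 = {u @ v | u v. u \<in> L1 \<and> v \<in> L2}"

definition kstar :: "'a list set \<Rightarrow> 'a list set" where
  "kstar L = {concat ws | ws. set ws \<subseteq> L}"

definition plus_words :: "'a list set" where
  "plus_words = {u. u \<noteq> []}"

definition autocorr :: "'a list \<Rightarrow> 'a list set" where
  "autocorr w = {[]} \<union> {e. e \<noteq> [] \<and> length e < length w \<and>
                          (\<exists>e'. e' \<noteq> [] \<and> w @ e = e' @ w)}"

definition autocorr0 :: "'a list \<Rightarrow> 'a list set" where
  "autocorr0 w = autocorr w - {[]}"

definition Kset :: "'a list \<Rightarrow> 'a list set" where
  "Kset w = autocorr0 w - lconc (autocorr0 w) plus_words"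

definition prefix_code :: "'a list set \<Rightarrow> bool" where
  "prefix_code X \<longleftrightarrow> [] \<notin> X \<and> (\<forall>x\<in>X. \<forall>y\<in>X. (\<exists>z. y = x @ z) \<longrightarrow> x = y)"

end

theory Submission
  imports Defs
begin

(* A word e lies in the autocorrelation set C of w iff w is a border of w e,
   i.e. w e = e' w.  The key combinatorial fact is that C_o is closed under removing a
   prefix lying in C_o: if k and k z are both in C_o (z nonempty), then so is z.
   Consequently every word of C_o factors, by strong induction on its length, into
   words of K = C_o \ C_o A^+ (its members with no proper prefix in C_o), so C* = K*.
   Independently, K is a prefix code for purely order-theoretic reasons (it consists of
   the prefix-minimal elements of C_o), and every prefix code generates its Kleene star
   unambiguously. *)

lemma kstar_nil: "[] \<in> kstar L"
  unfolding kstar_def by (rule CollectI, rule exI[of _ "[]"]) auto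

lemma kstar_single: "u \<in> L \<Longrightarrow> u \<in> kstar L"
  unfolding kstar_def by (rule CollectI, rule exI[of _ "[u]"]) auto

lemma kstar_append: "u \<in> kstar L \<Longrightarrow> v \<in> kstar L \<Longrightarrow> u @ v \<in> kstar L"
proof -
  assume "u \<in> kstar L" "v \<in> kstar L"
  then obtain us vs where "u = concat us" "set us \<subseteq> L" "v = concat vs" "set vs \<subseteq> L"
    unfolding kstar_def by blast
  then have "u @ v = concat (us @ vs) \<and> set (us @ vs) \<subseteq> L" by simp
  then show ?thesis unfolding kstar_def by blast
qed

lemma kstar_concat: "set ws \<subseteq> kstar L \<Longrightarrow> concat ws \<in> kstar L"
  by (induction ws) (auto intro: kstar_append kstar_nil)

lemma kstar_least: "L \<subseteq> kstar M \<Longrightarrow> kstar L \<subseteq> kstar M"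
  unfolding kstar_def[of L] using kstar_concat by blast

lemma kstar_mono: "L \<subseteq> M \<Longrightarrow> kstar L \<subseteq> kstar M"
  unfolding kstar_def by blast

lemma prefix_code_head_eq:
  assumes pc: "prefix_code X" and "a \<in> X" "b \<in> X" and eq: "a @ u = b @ v"
  shows "a = b"
proof -
  from eq obtain us where "(a = b @ us) \<or> (a @ us = b)"
    by (auto simp: append_eq_append_conv2)
  then show ?thesis using pc \<open>a \<in> X\<close> \<open>b \<in> X\<close> unfolding prefix_code_def by metis
qed

lemma prefix_code_unique_factorization:
  assumes pc: "prefix_code X"
  shows "set ks \<subseteq> X \<Longrightarrow> set ks' \<subseteq> X \<Longrightarrow> concat ks = concat ks' \<Longrightarrow> ks = ks'"
proof (induction ks arbitrary: ks')
  case Nil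
  have "[] \<notin> X" using pc unfolding prefix_code_def by simp
  with Nil show ?case by (cases ks') auto
next
  case (Cons a ks)
  have "[] \<notin> X" using pc unfolding prefix_code_def by simp
  with Cons.prems obtain b ks2 where ks': "ks' = b # ks2" by (cases ks') auto
  with Cons.prems have "a = b"
    using prefix_code_head_eq[OF pc, of a b "concat ks" "concat ks2"] by simp
  with Cons.prems ks' have "ks = ks2" using Cons.IH[of ks2] by simp
  with \<open>a = b\<close> ks' show ?case by simp
qed

lemma prefix_minimal_prefix_code:
  assumes "[] \<notin> X"
  shows "prefix_code (X - lconc X plus_words)"
  unfolding prefix_code_def
proof (intro conjI ballI impI)
  show "[] \<notin> X - lconc X plus_words" using assms by simp
next
  fix x y assume x: "x \<in> X - lconc X plus_words" and y: "y \<in> X - lconc X plus_words"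
    and "\<exists>z. y = x @ z"
  then obtain z where yz: "y = x @ z" by blast
  have "z = []"
  proof (rule ccontr)
    assume "z \<noteq> []"
    then have "y \<in> lconc X plus_words"
      using x yz unfolding lconc_def plus_words_def by auto
    with y show False by simp
  qed
  with yz show "x = y" by simp
qed

lemma autocorr0_iff:
  "e \<in> autocorr0 w \<longleftrightarrow> e \<noteq> [] \<and> length e < length w \<and> (\<exists>e'. w @ e = e' @ w)"
  unfolding autocorr0_def autocorr_def by auto

text \<open>Key fact: C_o is closed under removing a prefix in C_o.  If w k = k' w and
  w k z = e' w, then k' w z = e' w with k' no longer than e', so w z = y w where y is the
  remainder of e' after k'.\<close>
lemma autocorr0_remove_prefix:
  assumes e: "k @ z \<in> autocorr0 w" and k: "k \<in> autocorr0 w" and z: "z \<noteq> []"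
  shows "z \<in> autocorr0 w"
proof -
  obtain e' where e': "w @ k @ z = e' @ w" and short: "length (k @ z) < length w"
    using e unfolding autocorr0_iff by auto
  obtain k' where k': "w @ k = k' @ w"
    using k unfolding autocorr0_iff by auto
  have "k' @ (w @ z) = e' @ w" using e' k' by (metis append.assoc)
  moreover have "length k' \<le> length e'"
    using arg_cong[OF e', of length] arg_cong[OF k', of length] by simp
  ultimately have "w @ z = drop (length k') e' @ w"
    by (metis append_eq_append_conv_if)
  with z short show ?thesis unfolding autocorr0_iff by auto
qed

text \<open>Every word of C_o factors into words of K, by strong induction on its length:
  a word outside K splits as k z with k in C_o, and z lies in C_o as well.\<close>
lemma autocorr0_in_kstar_Kset: "e \<in> autocorr0 w \<Longrightarrow> e \<in> kstar (Kset w)"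
proof (induction "length e" arbitrary: e rule: less_induct)
  case less
  show ?case
  proof (cases "e \<in> Kset w")
    case True
    then show ?thesis by (rule kstar_single)
  next
    case False
    with less.prems obtain k z where kz: "e = k @ z" "k \<in> autocorr0 w" "z \<noteq> []"
      unfolding Kset_def lconc_def plus_words_def by auto
    have "z \<in> autocorr0 w" using autocorr0_remove_prefix less.prems kz by blast
    moreover have "k \<noteq> []" using kz(2) unfolding autocorr0_iff by simp
    ultimately have "k \<in> kstar (Kset w)" "z \<in> kstar (Kset w)"
      using less.hyps kz by auto
    with kz(1) show ?thesis using kstar_append by blast
  qed
qed

lemma autocorr_subset_kstar_Kset: "autocorr w \<subseteq> kstar (Kset w)"
  using autocorr0_in_kstar_Kset[of _ w] kstar_nil[of "Kset w"]
  unfolding autocorr0_def by blast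

theorem mainTheorem1:
  fixes w :: "'a::finite list"
  assumes "length w \<ge> 2"
  shows "prefix_code (Kset w) \<and> kstar (Kset w) = kstar (autocorr w) \<and>
         (\<forall>u \<in> kstar (autocorr w). \<exists>!ks. set ks \<subseteq> Kset w \<and> concat ks = u)"
proof -
  have code: "prefix_code (Kset w)"
    unfolding Kset_def by (rule prefix_minimal_prefix_code) (simp add: autocorr0_def)
  have star_eq: "kstar (Kset w) = kstar (autocorr w)"
  proof
    show "kstar (Kset w) \<subseteq> kstar (autocorr w)"
      by (rule kstar_mono) (auto simp: Kset_def autocorr0_def)
    show "kstar (autocorr w) \<subseteq> kstar (Kset w)"
      by (rule kstar_least[OF autocorr_subset_kstar_Kset])
  qed
  have "\<exists>!ks. set ks \<subseteq> Kset w \<and> concat ks = u" if "u \<in> kstar (autocorr w)" for u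
  proof -
    from that star_eq have "u \<in> kstar (Kset w)" by simp
    then obtain ks where "set ks \<subseteq> Kset w" "concat ks = u"
      unfolding kstar_def by auto
    then show ?thesis
      using prefix_code_unique_factorization[OF code] by blast
  qed
  with code star_eq show ?thesis by blast
qed

end
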